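(* For all $j_1,j_2\in\tfrac12\mathbb{N}^+$, every entry of $R^{(j_1,j_2)}(t)$ (a Laurent polynomial in $t$) has degree at most $4j_1j_2$ in $t$, and \[ \lim_{t\to\infty}\frac{R^{(j_1,j_2)}(t)}{t^{4j_1j_2}}=q^{2j_1j_2}\widehat R^{(j_1,j_2)}, \] i.e. the matrix of coefficients of $t^{4j_1j_2}$ in $R^{(j_1,j_2)}(t)$ equals $q^{2j_1j_2}\widehat R^{(j_1,j_2)}$.
   Context: $\mathbb{F}$ is a field of characteristic zero in which every element has a square root; $q\in\mathbb{F}$ nonzero, not a root of unity, with fixed square root $q^{1/2}$ ($q^{k/2}:=(q^{1/2})^k$); other $(\cdot)^{1/2}$ are fixed square roots in $\mathbb{F}$. $[n]_q=\frac{q^n-q^{-n}}{q-q^{-1}}$, $c(t)=t-t^{-1}$, $\tfrac12\mathbb{N}^+=\{\tfrac12,1,\tfrac32,\dots\}$, $t$ an indeterminate, $\otimes$ Kronecker product. Leg notation: for factors $\mathbb{F}^{n_1}\otimes\mathbb{F}^{n_2}\otimes\mathbb{F}^{n_3}$, $X_{12}=X\otimes I_{n_3}$, $X_{23}=I_{n_1}\otimes X$, $X_{13}=P(X\otimes I_{n_2})P$ with $P$ the flip of factors 2,3; for non-square $Y$, $Y_{12}=Y\otimes I_{n_3}$, $Y_{23}=I_{n_1}\otimes Y$. For $j\in\tfrac12\mathbb{N}^+$: $\mathcal{E}^{(j+\frac12)}$ is $(4j+2)\times(2j+2)$ with only nonzero entries $\mathcal{E}_{(a,a)}=\big(\frac{[2j+2-a]_q}{[2j+1]_q}\big)^{1/2}$,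 $\mathcal{E}_{(a+2j+1,a+1)}=\big(\frac{[a]_q}{[2j+1]_q}\big)^{1/2}$ ($1\le a\le 2j+1$); $\mathcal{F}^{(j+\frac12)}$ is $(2j+2)\times(4j+2)$ with only nonzero entries $\mathcal{F}_{(a,a)}=\frac{([2j+2-a]_q[2j+1]_q)^{1/2}}{[2j+2-a]_q+[a-1]_q}$, $\mathcal{F}_{(a+1,a+2j+1)}=\frac{([a]_q[2j+1]_q)^{1/2}}{[2j+1-a]_q+[a]_q}$ ($1\le a\le 2j+1$). $R^{(\frac12,\frac12)}(t)$ is the $4\times4$ matrix with rows $(c(qt),0,0,0),(0,c(t),c(q),0),(0,c(q),c(t),0),(0,0,0,c(qt))$; recursively $R^{(\frac12,j+\frac12)}(t)=\mathcal{F}^{(j+\frac12)}_{23}R^{(\frac12,j)}_{13}(q^{-1/2}t)R^{(\frac12,\frac12)}_{12}(q^{j}t)\mathcal{E}^{(j+\frac12)}_{23}$ (factor sizes $2,2,2j+1$) and $R^{(j_1+\frac12,j_2)}(t)=\mathcal{F}^{(j_1+\frac12)}_{12}R^{(\frac12,j_2)}_{13}(q^{-j_1}t)R^{(j_1,j_2)}_{23}(q^{1/2}t)\mathcal{E}^{(j_1+\frac12)}_{12}$ (factor sizes $2,2j_1+1,2j_2+1$). $\widehat R^{(j_1,j_2)}=q^{2\,\mathrm{diag}(j_1,\dots,-j_1)\otimes\mathrm{diag}(j_2,\dots,-j_2)}$ (diagonal with entries $q^{2\alpha\beta}$). *)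

theory Defs
  imports "HOL-Computational_Algebra.Formal_Laurent_Series" "Jordan_Normal_Form.Matrix"
begin

text \<open>Matrices are Jordan_Normal_Form matrices, indices are 0-based.
  The Kronecker product uses the standard (lexicographic) index ordering.\<close>

definition kron :: "'a::times mat \<Rightarrow> 'a mat \<Rightarrow> 'a mat" where
  "kron A B = mat (dim_row A * dim_row B) (dim_col A * dim_col B)
     (\<lambda>(i,j). A $$ (i div dim_row B, j div dim_col B) * B $$ (i mod dim_row B, j mod dim_col B))"

text \<open>Flip of tensor factors 2 and 3: the linear map
  F^n1 (x) F^n2 (x) F^n3 -> F^n1 (x) F^n3 (x) F^n2, v1 (x) v2 (x) v3 |-> v1 (x) v3 (x) v2.\<close>
definition flipP :: "nat \<Rightarrow> nat \<Rightarrow> nat \<Rightarrow> 'a::{zero,one} mat" where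
  "flipP n1 n2 n3 = mat (n1*n2*n3) (n1*n2*n3)
     (\<lambda>(r,c). let i1 = c div (n2*n3); i2 = (c div n3) mod n2; i3 = c mod n3
              in if r = i1*(n3*n2) + i3*n2 + i2 then 1 else 0)"

definition leg12 :: "nat \<Rightarrow> 'a::semiring_1 mat \<Rightarrow> 'a mat" where
  "leg12 n3 X = kron X (1\<^sub>m n3)"

definition leg23 :: "nat \<Rightarrow> 'a::semiring_1 mat \<Rightarrow> 'a mat" where
  "leg23 n1 X = kron (1\<^sub>m n1) X"

definition leg13 :: "nat \<Rightarrow> nat \<Rightarrow> nat \<Rightarrow> 'a::semiring_1 mat \<Rightarrow> 'a mat" where
  "leg13 n1 n2 n3 X = flipP n1 n3 n2 * kron X (1\<^sub>m n2) * flipP n1 n2 n3"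


definition qint :: "'a::field \<Rightarrow> nat \<Rightarrow> 'a" where
  "qint q n = (q ^ n - inverse q ^ n) / (q - inverse q)"

text \<open>Spins j are encoded by n = 2j (a positive natural number); so E^{(j+1/2)} is
  Emat sq q n with n = 2j, of size (2n+2) x (n+2).
  The square roots (X Y)^{1/2} and (X/Y)^{1/2} of products/quotients of q-numbers are read as
  sq X * sq Y and sq X / sq Y, for the fixed square root function sq.\<close>

definition Emat :: "('a::field \<Rightarrow> 'a) \<Rightarrow> 'a \<Rightarrow> nat \<Rightarrow> 'a fls mat" where
  "Emat sq q n = mat (2*n+2) (n+2) (\<lambda>(r,c).
     if r < n+1 \<and> c = r then fls_const (sq (qint q (n+1-r)) / sq (qint q (n+1)))
     else if n+1 \<le> r \<and> r < 2*n+2 \<and> c = r - n then fls_const (sq (qint q (r-n)) / sq (qint q (n+1)))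
     else 0)"

definition Fmat :: "('a::field \<Rightarrow> 'a) \<Rightarrow> 'a \<Rightarrow> nat \<Rightarrow> 'a fls mat" where
  "Fmat sq q n = mat (n+2) (2*n+2) (\<lambda>(r,c).
     if c < n+1 \<and> r = c then
       fls_const (sq (qint q (n+1-c)) * sq (qint q (n+1)) / (qint q (n+1-c) + qint q c))
     else if n+1 \<le> c \<and> c < 2*n+2 \<and> r = c - n then
       fls_const (sq (qint q (c-n)) * sq (qint q (n+1)) / (qint q (2*n+1-c) + qint q (c-n)))
     else 0)"

definition cfun :: "'a::field \<Rightarrow> 'a fls" where
  "cfun s = fls_const s * fls_X - fls_const (inverse s) * fls_X_inv"
  \<comment> \<open>c(s t) = s t - (s t)^{-1} as a Laurent polynomial in t\<close>

definition Rbase :: "'a::field \<Rightarrow> 'a \<Rightarrow> 'a fls mat" where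
  "Rbase q s = mat 4 4 (\<lambda>(r,c).
     if (r = 0 \<and> c = 0) \<or> (r = 3 \<and> c = 3) then cfun (q*s)
     else if (r = 1 \<and> c = 1) \<or> (r = 2 \<and> c = 2) then cfun s
     else if (r = 1 \<and> c = 2) \<or> (r = 2 \<and> c = 1) then fls_const (q - inverse q)
     else 0)"

text \<open>Rmat sq q qh n1 n2 s = R^{(n1/2, n2/2)}(s t), the matrix of Laurent polynomials in t
  (qh is the fixed square root of q). Values with n1 = 0 or n2 = 0 are junk.\<close>
fun Rmat :: "('a::field \<Rightarrow> 'a) \<Rightarrow> 'a \<Rightarrow> 'a \<Rightarrow> nat \<Rightarrow> nat \<Rightarrow> 'a \<Rightarrow> 'a fls mat" where
  "Rmat sq q qh (Suc 0) (Suc 0) s = Rbase q s"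
| "Rmat sq q qh (Suc 0) (Suc (Suc n)) s =
     leg23 2 (Fmat sq q (Suc n))
     * leg13 2 2 (Suc (Suc n)) (Rmat sq q qh (Suc 0) (Suc n) (inverse qh * s))
     * leg12 (Suc (Suc n)) (Rmat sq q qh (Suc 0) (Suc 0) (qh ^ Suc n * s))
     * leg23 2 (Emat sq q (Suc n))"
| "Rmat sq q qh (Suc (Suc m)) n2 s =
     leg12 (n2+1) (Fmat sq q (Suc m))
     * leg13 2 (Suc (Suc m)) (n2+1) (Rmat sq q qh (Suc 0) n2 (inverse qh ^ Suc m * s))
     * leg23 2 (Rmat sq q qh (Suc m) n2 (qh * s))
     * leg12 (n2+1) (Emat sq q (Suc m))"
| "Rmat sq q qh 0 n2 s = 0\<^sub>m 1 1"
| "Rmat sq q qh (Suc 0) 0 s = 0\<^sub>m 1 1"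

text \<open>Rhat^{(n1/2,n2/2)}: diagonal with entries q^{2 alpha beta}, alpha = n1/2 - i, beta = n2/2 - k,
  in Kronecker order (i,k); q^{2 alpha beta} = qh^{(n1-2i)(n2-2k)}.\<close>
definition Rhat :: "'a::field \<Rightarrow> nat \<Rightarrow> nat \<Rightarrow> 'a mat" where
  "Rhat qh n1 n2 = mat ((n1+1)*(n2+1)) ((n1+1)*(n2+1)) (\<lambda>(r,c).
     if r = c then qh powi ((int n1 - 2 * int (r div (n2+1))) * (int n2 - 2 * int (r mod (n2+1))))
     else 0)"

end

theory Submission
  imports Defs
begin

text \<open>
  Say that a matrix M of Laurent polynomials in t has top coefficients L in degree d if no
  entry of M contains a power t^k with k > d and L is the matrix of t^d-coefficients, i.e.
  L = lim M(t)/t^d. This notion is multiplicative for matrix and Kronecker products, degrees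
  adding up. Following the recursive definition of R, the top coefficient of R(s t) is therefore
  the product of the top coefficients of the factors: the constant matrices F and E, and, by
  induction, scalar multiples of the diagonal matrices Rhat for the smaller spins. Such a
  product F D E collapses to (s q^(1/2))^(4 j1 j2) Rhat because F E = 1 and E maps weight
  vectors of spin 1/2 (x) spin j to weight vectors of spin j + 1/2 of the same total weight,
  so that D E = E Rhat by bilinearity of the exponent 2 alpha beta.
\<close>

section \<open>Top coefficients of matrices of Laurent polynomials\<close>

lemma fls_nth_mult_top:
  fixes f g :: "'a::comm_semiring_1 fls"
  assumes f: "\<forall>k>a. fls_nth f k = 0" and g: "\<forall>k>b. fls_nth g k = 0"
  shows "\<forall>k>a+b. fls_nth (f * g) k = 0"
    and "fls_nth (f * g) (a + b) = fls_nth f a * fls_nth g b"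
proof -
  have top: "fls_nth (f * g) n = (\<Sum>i=fls_subdegree f..n - fls_subdegree g.
               if i = a \<and> n = a + b then fls_nth f a * fls_nth g b else 0)"
    if "n \<ge> a + b" for n
    unfolding fls_times_nth(2)
  proof (rule sum.cong[OF refl])
    fix i
    show "fls_nth f i * fls_nth g (n - i) = (if i = a \<and> n = a + b then fls_nth f a * fls_nth g b else 0)"
    proof (cases "i > a \<or> n - i > b")
      case False
      then have "i = a" "n = a + b" using that by auto
      then show ?thesis by simp
    qed (use f g in auto)
  qed
  then show "\<forall>k>a+b. fls_nth (f * g) k = 0" by simp
  show "fls_nth (f * g) (a + b) = fls_nth f a * fls_nth g b"
  proof (cases "fls_nth f a * fls_nth g b = 0")
    case False
    then have "fls_subdegree f \<le> a" "fls_subdegree g \<le> b"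
      by (auto intro: fls_subdegree_leI)
    with top[of "a + b"] show ?thesis by simp
  qed (use top[of "a + b"] in simp)
qed

definition top_coeffs :: "int \<Rightarrow> 'a::zero fls mat \<Rightarrow> 'a mat \<Rightarrow> bool" where
  "top_coeffs d M L \<longleftrightarrow> (\<forall>i<dim_row M. \<forall>j<dim_col M. \<forall>k>d. fls_nth (M $$ (i,j)) k = 0)
     \<and> map_mat (\<lambda>f. fls_nth f d) M = L"

lemma top_coeffs_dim:
  assumes "top_coeffs d M L"
  shows "dim_row M = dim_row L" "dim_col M = dim_col L"
  using assms by (auto simp: top_coeffs_def)

lemma top_coeffsI:
  assumes "dim_row L = dim_row M" "dim_col L = dim_col M"
    and "\<And>i j. i < dim_row M \<Longrightarrow> j < dim_col M \<Longrightarrow>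
           (\<forall>k>d. fls_nth (M $$ (i,j)) k = 0) \<and> fls_nth (M $$ (i,j)) d = L $$ (i,j)"
  shows "top_coeffs d M L"
  using assms unfolding top_coeffs_def by (auto intro!: eq_matI)

lemma top_coeffsD:
  assumes "top_coeffs d M L" "i < dim_row M" "j < dim_col M"
  shows "\<forall>k>d. fls_nth (M $$ (i,j)) k = 0" "fls_nth (M $$ (i,j)) d = L $$ (i,j)"
  using assms unfolding top_coeffs_def by auto

lemma top_coeffs_mult:
  fixes M N :: "'a::comm_semiring_1 fls mat"
  assumes M: "top_coeffs a M A" and N: "top_coeffs b N B" and "dim_col M = dim_row N"
  shows "top_coeffs (a + b) (M * N) (A * B)"
proof (rule top_coeffsI)
  fix i j assume i: "i < dim_row (M * N)" and j: "j < dim_col (M * N)"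
  have entry: "fls_nth ((M * N) $$ (i,j)) k = (\<Sum>l<dim_col M. fls_nth (M $$ (i,l) * N $$ (l,j)) k)" for k
    using i j assms(3) by (simp add: scalar_prod_def fls_nth_sum lessThan_atLeast0)
  have "\<forall>k>a+b. fls_nth (M $$ (i,l) * N $$ (l,j)) k = 0"
    "fls_nth (M $$ (i,l) * N $$ (l,j)) (a + b) = A $$ (i,l) * B $$ (l,j)" if "l < dim_col M" for l
    using fls_nth_mult_top[OF top_coeffsD(1)[OF M] top_coeffsD(1)[OF N]] top_coeffsD(2)[OF M] top_coeffsD(2)[OF N]
      i j that assms(3) by auto
  then show "(\<forall>k>a + b. fls_nth ((M * N) $$ (i,j)) k = 0) \<and> fls_nth ((M * N) $$ (i,j)) (a + b) = (A * B) $$ (i,j)"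
    unfolding entry using i j assms(3) top_coeffs_dim[OF M] top_coeffs_dim[OF N]
    by (simp add: scalar_prod_def lessThan_atLeast0)
qed (use top_coeffs_dim[OF M] top_coeffs_dim[OF N] in auto)

lemma top_coeffs_constI:
  assumes "dim_row M = dim_row X" "dim_col M = dim_col X"
    and "\<And>i j. i < dim_row M \<Longrightarrow> j < dim_col M \<Longrightarrow> M $$ (i,j) = fls_const (X $$ (i,j))"
  shows "top_coeffs 0 M X"
  using assms by (auto simp: top_coeffs_def intro!: eq_matI)

lemma top_coeffs_one: "top_coeffs 0 (1\<^sub>m n) (1\<^sub>m n)"
  by (rule top_coeffs_constI) auto

section \<open>Kronecker products and leg notation\<close>

lemma sum_lessThan_mult: "(\<Sum>k<a * b. g k) = (\<Sum>i<a. \<Sum>j<b. g (i * b + j :: nat))"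
proof -
  have "sum g {i * b..<i * b + b} = (\<Sum>j<b. g (i * b + j))" for i
    using sum.shift_bounds_nat_ivl[of g 0 "i * b" b] by (simp add: atLeast0LessThan add.commute)
  then show ?thesis by (simp add: sum.nat_group[symmetric])
qed

lemma index_less_mult:
  fixes k l a b :: nat
  assumes "k < a" "l < b"
  shows "k * b + l < a * b"
proof -
  have "k * b + l < Suc k * b" using assms(2) by simp
  also have "\<dots> \<le> a * b" using assms(1) by (intro mult_le_mono1) simp
  finally show ?thesis .
qed

lemma mod_less_of_less_mult: "i < a * b \<Longrightarrow> i mod b < (b::nat)"
  by (cases "b = 0") auto

lemma div_mod_eq_imp_eq: "i div b = j div b \<Longrightarrow> i mod b = j mod (b::nat) \<Longrightarrow> i = j"
  by (metis div_mult_mod_eq)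

lemma kron_dim [simp]:
  "dim_row (kron A B) = dim_row A * dim_row B" "dim_col (kron A B) = dim_col A * dim_col B"
  by (auto simp: kron_def)

lemma kron_index [simp]:
  "i < dim_row A * dim_row B \<Longrightarrow> j < dim_col A * dim_col B \<Longrightarrow>
   kron A B $$ (i,j) = A $$ (i div dim_row B, j div dim_col B) * B $$ (i mod dim_row B, j mod dim_col B)"
  by (simp add: kron_def)

lemma kron_mult_kron:
  fixes A B C D :: "'a::comm_semiring_1 mat"
  assumes "dim_col A = dim_row C" "dim_col B = dim_row D"
  shows "kron A B * kron C D = kron (A * C) (B * D)"
proof (rule eq_matI)
  fix i j assume "i < dim_row (kron (A * C) (B * D))" "j < dim_col (kron (A * C) (B * D))"
  then have i: "i < dim_row A * dim_row B" and j: "j < dim_col C * dim_col D" by auto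
  have "(kron A B * kron C D) $$ (i,j) =
      (\<Sum>k<dim_col A * dim_col B. kron A B $$ (i,k) * kron C D $$ (k,j))"
    using i j assms by (simp add: scalar_prod_def lessThan_atLeast0)
  also have "\<dots> = (\<Sum>k<dim_col A. \<Sum>l<dim_col B.
      (A $$ (i div dim_row B, k) * C $$ (k, j div dim_col D)) *
      (B $$ (i mod dim_row B, l) * D $$ (l, j mod dim_col D)))"
    unfolding sum_lessThan_mult
  proof (intro sum.cong refl)
    fix k l assume "k \<in> {..<dim_col A}" "l \<in> {..<dim_col B}"
    then have "k * dim_col B + l < dim_col A * dim_col B"
      using index_less_mult by auto
    then show "kron A B $$ (i, k * dim_col B + l) * kron C D $$ (k * dim_col B + l, j) =
      (A $$ (i div dim_row B, k) * C $$ (k, j div dim_col D)) *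
      (B $$ (i mod dim_row B, l) * D $$ (l, j mod dim_col D))"
      using i j \<open>l \<in> _\<close> assms by (simp add: mult_ac)
  qed
  also have "\<dots> = (A * C) $$ (i div dim_row B, j div dim_col D) * (B * D) $$ (i mod dim_row B, j mod dim_col D)"
    using i j assms less_mult_imp_div_less mod_less_of_less_mult
    by (simp add: scalar_prod_def sum_product lessThan_atLeast0[symmetric])
  finally show "(kron A B * kron C D) $$ (i,j) = kron (A * C) (B * D) $$ (i,j)"
    using i j by simp
qed (use assms in auto)

lemma kron_one_left_nonzero:
  fixes M :: "'a::semiring_1 mat"
  assumes "i < n * dim_row M" "j < n * dim_col M" "kron (1\<^sub>m n) M $$ (i,j) \<noteq> 0"
  shows "i div dim_row M = j div dim_col M" "M $$ (i mod dim_row M, j mod dim_col M) \<noteq> 0"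
  using assms less_mult_imp_div_less[of i n] less_mult_imp_div_less[of j n]
  by (auto simp: mult.commute[of n] split: if_splits)

lemma kron_one_right_nonzero:
  fixes M :: "'a::semiring_1 mat"
  assumes "i < dim_row M * n" "j < dim_col M * n" "kron M (1\<^sub>m n) $$ (i,j) \<noteq> 0"
  shows "i mod n = j mod n" "M $$ (i div n, j div n) \<noteq> 0"
  using assms mod_less_of_less_mult[of i _ n] mod_less_of_less_mult[of j _ n]
  by (auto split: if_splits)

lemma top_coeffs_kron:
  fixes M N :: "'a::comm_semiring_1 fls mat"
  assumes M: "top_coeffs a M A" and N: "top_coeffs b N B"
  shows "top_coeffs (a + b) (kron M N) (kron A B)"
proof (rule top_coeffsI)
  fix i j assume "i < dim_row (kron M N)" "j < dim_col (kron M N)"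
  then have i: "i < dim_row M * dim_row N" and j: "j < dim_col M * dim_col N" by auto
  note bounds = less_mult_imp_div_less[OF i] less_mult_imp_div_less[OF j]
    mod_less_of_less_mult[OF i] mod_less_of_less_mult[OF j]
  show "(\<forall>k>a + b. fls_nth (kron M N $$ (i,j)) k = 0) \<and> fls_nth (kron M N $$ (i,j)) (a + b) = kron A B $$ (i,j)"
    using fls_nth_mult_top[OF top_coeffsD(1)[OF M] top_coeffsD(1)[OF N]] top_coeffsD(2)[OF M] top_coeffsD(2)[OF N]
      i j bounds top_coeffs_dim[OF M] top_coeffs_dim[OF N] by simp
qed (use top_coeffs_dim[OF M] top_coeffs_dim[OF N] in auto)

lemma flipP_dim [simp]:
  "dim_row (flipP n1 n2 n3) = n1 * n2 * n3" "dim_col (flipP n1 n2 n3) = n1 * n2 * n3"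
  by (simp_all add: flipP_def)

lemma leg_dim [simp]:
  "dim_row (leg12 n X) = dim_row X * n" "dim_col (leg12 n X) = dim_col X * n"
  "dim_row (leg23 n X) = n * dim_row X" "dim_col (leg23 n X) = n * dim_col X"
  "dim_row (leg13 n1 n2 n3 X) = n1 * n3 * n2" "dim_col (leg13 n1 n2 n3 X) = n1 * n2 * n3"
  by (simp_all add: leg12_def leg23_def leg13_def)

lemma leg12_mult:
  fixes A B :: "'a::comm_semiring_1 mat"
  shows "dim_col A = dim_row B \<Longrightarrow> leg12 n A * leg12 n B = leg12 n (A * B)"
  by (simp add: leg12_def kron_mult_kron)

lemma leg23_mult:
  fixes A B :: "'a::comm_semiring_1 mat"
  shows "dim_col A = dim_row B \<Longrightarrow> leg23 n A * leg23 n B = leg23 n (A * B)"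
  by (simp add: leg23_def kron_mult_kron)

lemma top_coeffs_flipP: "top_coeffs 0 (flipP n1 n2 n3) (flipP n1 n2 n3)"
  by (rule top_coeffs_constI) (auto simp: flipP_def Let_def)

lemma top_coeffs_leg12:
  fixes X :: "'a::comm_semiring_1 fls mat"
  shows "top_coeffs d X L \<Longrightarrow> top_coeffs d (leg12 n X) (leg12 n L)"
  using top_coeffs_kron[OF _ top_coeffs_one] by (fastforce simp: leg12_def)

lemma top_coeffs_leg23:
  fixes X :: "'a::comm_semiring_1 fls mat"
  shows "top_coeffs d X L \<Longrightarrow> top_coeffs d (leg23 n X) (leg23 n L)"
  using top_coeffs_kron[OF top_coeffs_one] by (fastforce simp: leg23_def)

lemma top_coeffs_leg13:
  fixes X :: "'a::comm_semiring_1 fls mat"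
  assumes X: "top_coeffs d X L" and "dim_row X = n1 * n3" "dim_col X = n1 * n3"
  shows "top_coeffs d (leg13 n1 n2 n3 X) (leg13 n1 n2 n3 L)"
proof -
  have "top_coeffs (0 + d + 0) (flipP n1 n3 n2 * kron X (1\<^sub>m n2) * flipP n1 n2 n3)
      (flipP n1 n3 n2 * kron L (1\<^sub>m n2) * flipP n1 n2 n3)"
    by (intro top_coeffs_mult top_coeffs_flipP top_coeffs_leg12[OF X, unfolded leg12_def])
      (use assms(2,3) in \<open>simp_all add: mult_ac\<close>)
  then show ?thesis by (simp add: leg13_def)
qed

lemma dim_mat_diag [simp]: "dim_row (mat_diag n f) = n" "dim_col (mat_diag n f) = n"
  by (simp_all add: mat_diag_def)

lemma smult_mat_diag:
  fixes f :: "nat \<Rightarrow> 'a::semiring_0"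
  shows "c \<cdot>\<^sub>m mat_diag n f = mat_diag n (\<lambda>i. c * f i)"
  by (rule eq_matI) (auto simp: mat_diag_def)

lemma mat_diag_mult_mat_diag: "n = m \<Longrightarrow> mat_diag n f * mat_diag m g = mat_diag n (\<lambda>i. f i * g i)"
  by simp

lemma kron_mat_diag:
  fixes f g :: "nat \<Rightarrow> 'a::mult_zero"
  shows "kron (mat_diag a f) (mat_diag b g) = mat_diag (a * b) (\<lambda>i. f (i div b) * g (i mod b))"
  by (rule eq_matI) (auto simp: mat_diag_def less_mult_imp_div_less mod_less_of_less_mult
      dest: div_mod_eq_imp_eq)

lemma kron_one_one: "kron (1\<^sub>m a) (1\<^sub>m b) = (1\<^sub>m (a * b) :: 'a::semiring_1 mat)"
  unfolding mat_diag_one[symmetric] kron_mat_diag by simp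

lemma mat_diag_intertwine:
  fixes M :: "'a::comm_semiring_1 mat"
  assumes "M \<in> carrier_mat n m"
    and "\<And>r c. r < n \<Longrightarrow> c < m \<Longrightarrow> M $$ (r,c) \<noteq> 0 \<Longrightarrow> d r = d' c"
  shows "mat_diag n d * M = M * mat_diag m d'"
proof (rule eq_matI)
  fix i j assume "i < dim_row (M * mat_diag m d')" "j < dim_col (M * mat_diag m d')"
  then have "i < n" "j < m" using assms(1) by auto
  then show "(mat_diag n d * M) $$ (i,j) = (M * mat_diag m d') $$ (i,j)"
    using assms by (cases "M $$ (i,j) = 0") (auto simp: mat_diag_mult_left mat_diag_mult_right mult.commute)
qed (use assms(1) in auto)

lemma mult_intertwine_left_inverse:
  fixes F D E D' :: "'a::semiring_1 mat"
  assumes "F \<in> carrier_mat k n" "D \<in> carrier_mat n n" "E \<in> carrier_mat n k" "D' \<in> carrier_mat k k"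
    and "F * E = 1\<^sub>m k" "D * E = E * D'"
  shows "F * D * E = D'"
proof -
  have "F * D * E = F * (E * D')"
    using assms by (simp add: assoc_mult_mat[of F k n D n E])
  also have "\<dots> = (F * E) * D'"
    by (rule assoc_mult_mat[OF assms(1,3,4), symmetric])
  also have "\<dots> = D'"
    unfolding assms(5) using assms(4) by simp
  finally show ?thesis .
qed

lemma perm_conj_mat_diag:
  fixes g :: "nat \<Rightarrow> 'a::semiring_1"
  assumes "\<And>c. c < n \<Longrightarrow> \<sigma> c < n \<and> \<tau> (\<sigma> c) = c"
  shows "mat n n (\<lambda>(r,c). if r = \<tau> c then 1 else 0) * mat_diag n g
       * mat n n (\<lambda>(r,c). if r = \<sigma> c then 1 else 0) = mat_diag n (\<lambda>c. g (\<sigma> c))"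
proof -
  have "mat n n (\<lambda>(r,c). if r = \<tau> c then 1 else 0) * mat_diag n g
      = mat n n (\<lambda>(r,c). if r = \<tau> c then g c else 0)"
    by (subst mat_diag_mult_right[of _ n]) (auto intro!: eq_matI)
  also have "\<dots> * mat n n (\<lambda>(r,c). if r = \<sigma> c then 1 else 0) = mat_diag n (\<lambda>c. g (\<sigma> c))"
  proof (rule eq_matI)
    fix r c assume "r < dim_row (mat_diag n (\<lambda>c. g (\<sigma> c)))" "c < dim_col (mat_diag n (\<lambda>c. g (\<sigma> c)))"
    then have rc: "r < n" "c < n" by (simp_all add: mat_diag_def)
    have "(\<Sum>k<n. (if r = \<tau> k then g k else 0) * (if k = \<sigma> c then 1 else 0))
        = (\<Sum>k<n. if k = \<sigma> c then (if r = \<tau> k then g k else 0) else 0)"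
      by (rule sum.cong) auto
    also have "\<dots> = (if r = \<tau> (\<sigma> c) then g (\<sigma> c) else 0)"
      using assms[OF rc(2)] by simp
    finally have "(\<Sum>k<n. (if r = \<tau> k then g k else 0) * (if k = \<sigma> c then 1 else 0))
        = (if r = \<tau> (\<sigma> c) then g (\<sigma> c) else 0)" .
    then show "(mat n n (\<lambda>(r,c). if r = \<tau> c then g c else 0) * mat n n (\<lambda>(r,c). if r = \<sigma> c then 1 else 0)) $$ (r,c)
        = mat_diag n (\<lambda>c. g (\<sigma> c)) $$ (r,c)"
      using rc assms[OF rc(2)] by (simp add: scalar_prod_def lessThan_atLeast0 mat_diag_def)
  qed (simp_all add: mat_diag_def)
  finally show ?thesis .
qed

definition flip_index :: "nat \<Rightarrow> nat \<Rightarrow> nat \<Rightarrow> nat" where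
  "flip_index n2 n3 c = c div (n2 * n3) * (n3 * n2) + c mod n3 * n2 + (c div n3) mod n2"

lemma flipP_eq: "flipP n1 n2 n3 =
  mat (n1 * n2 * n3) (n1 * n2 * n3) (\<lambda>(r,c). if r = flip_index n2 n3 c then 1 else 0)"
  by (rule eq_matI) (auto simp: flipP_def flip_index_def Let_def)

lemma div_mod_index:
  fixes a b m :: nat
  assumes "b < m"
  shows "(a * m + b) div m = a" "(a * m + b) mod m = b"
  using assms by simp_all

lemma index3_decompose:
  fixes c :: nat
  assumes "c < n1 * n2 * n3"
  obtains i1 i2 i3 where "i1 < n1" "i2 < n2" "i3 < n3" "c = i1 * (n2 * n3) + i2 * n3 + i3"
proof
  have "n2 > 0" "n3 > 0" using assms by (auto intro: gr0I)
  then show "c div n3 mod n2 < n2" "c mod n3 < n3" by simp_all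
  show "c div (n2 * n3) < n1" using assms by (simp add: less_mult_imp_div_less mult.assoc)
  show "c = c div (n2 * n3) * (n2 * n3) + c div n3 mod n2 * n3 + c mod n3"
    by (metis add.assoc div_mult_mod_eq mod_mult2_eq mult.commute)
qed

lemma index3_div_mod:
  fixes i1 i2 i3 :: nat
  assumes "i2 < n2" "i3 < n3"
  shows "(i1 * (n2 * n3) + i2 * n3 + i3) div (n2 * n3) = i1"
    "(i1 * (n2 * n3) + i2 * n3 + i3) mod (n2 * n3) = i2 * n3 + i3"
    "(i1 * (n2 * n3) + i2 * n3 + i3) div n3 = i1 * n2 + i2"
    "(i1 * (n2 * n3) + i2 * n3 + i3) mod n3 = i3"
proof -
  have split1: "i1 * (n2 * n3) + i2 * n3 + i3 = i1 * (n2 * n3) + (i2 * n3 + i3)"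
    and split2: "i1 * (n2 * n3) + i2 * n3 + i3 = (i1 * n2 + i2) * n3 + i3"
    by (simp_all add: algebra_simps)
  show "(i1 * (n2 * n3) + i2 * n3 + i3) div (n2 * n3) = i1"
    "(i1 * (n2 * n3) + i2 * n3 + i3) mod (n2 * n3) = i2 * n3 + i3"
    unfolding split1 using div_mod_index index_less_mult[OF assms] by blast+
  show "(i1 * (n2 * n3) + i2 * n3 + i3) div n3 = i1 * n2 + i2"
    "(i1 * (n2 * n3) + i2 * n3 + i3) mod n3 = i3"
    unfolding split2 using div_mod_index assms(2) by blast+
qed

lemma flip_index_index3:
  assumes "i2 < n2" "i3 < n3"
  shows "flip_index n2 n3 (i1 * (n2 * n3) + i2 * n3 + i3) = i1 * (n3 * n2) + i3 * n2 + i2"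
  using assms by (simp add: flip_index_def index3_div_mod div_mod_index)

lemma leg13_mat_diag:
  fixes f :: "nat \<Rightarrow> 'a::semiring_1"
  shows "leg13 n1 n2 n3 (mat_diag (n1 * n3) f)
       = mat_diag (n1 * n2 * n3) (\<lambda>c. f (c div (n2 * n3) * n3 + c mod n3))"
proof -
  have flip: "flip_index n2 n3 c < n1 * n2 * n3 \<and> flip_index n3 n2 (flip_index n2 n3 c) = c
      \<and> flip_index n2 n3 c div n2 = c div (n2 * n3) * n3 + c mod n3"
    if c_less: "c < n1 * n2 * n3" for c
  proof -
    obtain i1 i2 i3 where i: "i1 < n1" "i2 < n2" "i3 < n3" and c: "c = i1 * (n2 * n3) + i2 * n3 + i3"
      using index3_decompose[OF c_less] by blast
    have "i1 * (n3 * n2) + i3 * n2 + i2 < n1 * n2 * n3"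
      using index_less_mult[OF i(1) index_less_mult[OF i(3,2)]] by (simp add: mult_ac)
    then show ?thesis
      using i by (simp add: c flip_index_index3 index3_div_mod)
  qed
  have "leg13 n1 n2 n3 (mat_diag (n1 * n3) f) = mat (n1 * n2 * n3) (n1 * n2 * n3) (\<lambda>(r,c). if r = flip_index n3 n2 c then 1 else 0)
      * mat_diag (n1 * n2 * n3) (\<lambda>i. f (i div n2))
      * mat (n1 * n2 * n3) (n1 * n2 * n3) (\<lambda>(r,c). if r = flip_index n2 n3 c then 1 else 0)"
    unfolding leg13_def flipP_eq mat_diag_one[symmetric] kron_mat_diag by (simp add: mult_ac)
  also have "\<dots> = mat_diag (n1 * n2 * n3) (\<lambda>c. f (c div (n2 * n3) * n3 + c mod n3))"
    by (subst perm_conj_mat_diag) (use flip in \<open>auto simp: mat_diag_def intro!: eq_matI\<close>)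
  finally show ?thesis .
qed

lemma leg12_mat_diag:
  fixes f :: "nat \<Rightarrow> 'a::semiring_1"
  shows "leg12 n (mat_diag m f) = mat_diag (m * n) (\<lambda>i. f (i div n))"
  unfolding leg12_def mat_diag_one[symmetric] kron_mat_diag by simp

lemma leg23_mat_diag:
  fixes f :: "nat \<Rightarrow> 'a::semiring_1"
  shows "leg23 n (mat_diag m f) = mat_diag (n * m) (\<lambda>i. f (i mod m))"
  unfolding leg23_def mat_diag_one[symmetric] kron_mat_diag by simp

lemma mod_mult_div_mod:
  fixes r m k :: nat
  shows "r mod (m * k) div m = r div m mod k" "r mod (m * k) mod m = r mod m"
  by (cases "m = 0"; simp add: mod_mult2_eq)+

lemma qint_0 [simp]: "qint q 0 = 0"
  by (simp add: qint_def)

lemma power_add_power_nonzero: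
  fixes q :: "'a::field_char_0"
  assumes q_nz: "q \<noteq> 0" and q_not_root: "\<forall>k::nat. k > 0 \<longrightarrow> q ^ k \<noteq> 1"
  shows "q ^ x + q ^ y \<noteq> 0"
proof -
  have "q ^ x + q ^ y \<noteq> 0" if "x \<le> y" for x y
  proof
    assume "q ^ x + q ^ y = 0"
    then have "q ^ x * (1 + q ^ (y - x)) = 0"
      using that by (simp add: algebra_simps power_add[symmetric])
    then have minus_one: "q ^ (y - x) = -1"
      using q_nz by (simp add: add_eq_0_iff)
    then have "y \<noteq> x" by auto
    moreover have "q ^ (2 * (y - x)) = 1"
      using minus_one by (simp add: power_mult mult.commute[of 2])
    ultimately show False
      using q_not_root that by auto
  qed
  then show ?thesis by (metis add.commute nat_le_linear)
qed

lemma qint_add_nonzero: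
  fixes q :: "'a::field_char_0"
  assumes q_nz: "q \<noteq> 0" and q_not_root: "\<forall>k::nat. k > 0 \<longrightarrow> q ^ k \<noteq> 1" and "x + y > 0"
  shows "qint q x + qint q y \<noteq> 0"
proof -
  have "q - inverse q \<noteq> 0"
  proof
    assume "q - inverse q = 0"
    then have "q ^ 2 = 1" using q_nz by (simp add: field_simps power2_eq_square)
    then show False using q_not_root by auto
  qed
  moreover have "q ^ (x + y) \<noteq> 1" using q_not_root assms(3) by auto
  moreover have "q ^ x - inverse q ^ x + (q ^ y - inverse q ^ y)
      = (q ^ x + q ^ y) * (q ^ (x + y) - 1) / q ^ (x + y)"
    using q_nz by (simp add: field_simps power_add power_inverse)
  ultimately show ?thesis
    using power_add_power_nonzero[OF q_nz q_not_root] q_nz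
    by (simp add: qint_def add_divide_distrib[symmetric])
qed

definition const_part :: "'a::zero fls mat \<Rightarrow> 'a mat" where
  "const_part M = map_mat (\<lambda>f. fls_nth f 0) M"

lemma const_part_dim [simp]:
  "dim_row (const_part M) = dim_row M" "dim_col (const_part M) = dim_col M"
  by (simp_all add: const_part_def)

lemma Emat_dim [simp]: "dim_row (Emat sq q n) = 2 * n + 2" "dim_col (Emat sq q n) = n + 2"
  by (simp_all add: Emat_def)

lemma Fmat_dim [simp]: "dim_row (Fmat sq q n) = n + 2" "dim_col (Fmat sq q n) = 2 * n + 2"
  by (simp_all add: Fmat_def)

lemma top_coeffs_Emat: "top_coeffs 0 (Emat sq q n) (const_part (Emat sq q n))"
  by (auto simp: top_coeffs_def const_part_def Emat_def)

lemma top_coeffs_Fmat: "top_coeffs 0 (Fmat sq q n) (const_part (Fmat sq q n))"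
  by (auto simp: top_coeffs_def const_part_def Fmat_def)

text \<open>Twice the weight alpha = n/2 - i of the i-th basis vector of the spin n/2 representation.\<close>

definition weight :: "nat \<Rightarrow> nat \<Rightarrow> int" where
  "weight n i = int n - 2 * int i"

lemma const_part_Emat_nonzero_weight:
  assumes "r < 2 * p + 2" "c < p + 2" "const_part (Emat sq q p) $$ (r,c) \<noteq> 0"
  shows "weight 1 (r div (p + 1)) + weight p (r mod (p + 1)) = weight (p + 1) c"
proof (cases "r < p + 1")
  case True
  then show ?thesis using assms by (auto simp: const_part_def Emat_def weight_def split: if_splits)
next
  case False
  then have "r div (p + 1) = 1" "r mod (p + 1) = r - (p + 1)"
    using assms(1) by (simp_all add: div_if mod_if)
  then show ?thesis using assms False by (auto simp: const_part_def Emat_def weight_def split: if_splits)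
qed

lemma const_part_Fmat_mult_Emat:
  fixes q :: "'a::field_char_0"
  assumes q_nz: "q \<noteq> 0" and q_not_root: "\<forall>k::nat. k > 0 \<longrightarrow> q ^ k \<noteq> 1"
    and sq: "\<forall>x. sq x * sq x = x" and "p \<ge> 1"
  shows "const_part (Fmat sq q p) * const_part (Emat sq q p) = 1\<^sub>m (p + 2)"
proof (rule eq_matI)
  fix r c assume "r < dim_row (1\<^sub>m (p + 2) :: 'a mat)" "c < dim_col (1\<^sub>m (p + 2) :: 'a mat)"
  then have r: "r < p + 2" and c: "c < p + 2" by auto
  define D where "D = qint q (p + 1 - r) + qint q r"
  have "D \<noteq> 0" using qint_add_nonzero[OF q_nz q_not_root, of "p + 1 - r" r] r by (simp add: D_def)
  have sq_sq: "sq x * sq x = x" for x using sq by simp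
  have "qint q (p + 1) \<noteq> 0"
    using qint_add_nonzero[OF q_nz q_not_root, of "p + 1" 0] by simp
  then have "sq (qint q (p + 1)) \<noteq> 0"
    using sq_sq by (metis mult_zero_left)
  have F: "const_part (Fmat sq q p) $$ (r,k) =
      (if k = r \<and> r < p + 1 then sq (qint q (p + 1 - r)) * sq (qint q (p + 1)) / D
       else if k = r + p \<and> 1 \<le> r then sq (qint q r) * sq (qint q (p + 1)) / D else 0)"
    if "k < 2 * p + 2" for k
    using that r \<open>p \<ge> 1\<close> by (auto simp: const_part_def Fmat_def D_def add.commute)
  have E: "const_part (Emat sq q p) $$ (k,c) =
      (if k < p + 1 \<and> c = k then sq (qint q (p + 1 - k)) / sq (qint q (p + 1))
       else if p + 1 \<le> k \<and> c = k - p then sq (qint q (k - p)) / sq (qint q (p + 1)) else 0)"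
    if "k < 2 * p + 2" for k
    using that c by (auto simp: const_part_def Emat_def)
  have entry: "const_part (Fmat sq q p) $$ (r,k) * const_part (Emat sq q p) $$ (k,c) =
      (if k = r \<and> c = r \<and> r < p + 1 then qint q (p + 1 - r) / D else 0)
    + (if k = r + p \<and> c = r \<and> 1 \<le> r then qint q r / D else 0)" if "k < 2 * p + 2" for k
    using \<open>sq (qint q (p + 1)) \<noteq> 0\<close> \<open>p \<ge> 1\<close>
    by (simp add: F[OF that] E[OF that] sq_sq mult_ac)
  have "(const_part (Fmat sq q p) * const_part (Emat sq q p)) $$ (r,c)
      = (\<Sum>k<2 * p + 2. const_part (Fmat sq q p) $$ (r,k) * const_part (Emat sq q p) $$ (k,c))"
    using r c by (simp add: const_part_def Fmat_def Emat_def scalar_prod_def lessThan_atLeast0)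
  also have "\<dots> = (if c = r \<and> r < p + 1 then qint q (p + 1 - r) / D else 0)
                 + (if c = r \<and> 1 \<le> r then qint q r / D else 0)"
    using r by (simp add: entry sum.distrib)
  also have "\<dots> = (if c = r then qint q (p + 1 - r) / D + qint q r / D else 0)"
    using r by (auto simp: not_less_eq_eq)
  also have "\<dots> = 1\<^sub>m (p + 2) $$ (r,c)"
    using r c \<open>D \<noteq> 0\<close> by (cases "c = r") (simp_all add: D_def add_divide_distrib[symmetric])
  finally show "(const_part (Fmat sq q p) * const_part (Emat sq q p)) $$ (r,c) = 1\<^sub>m (p + 2) $$ (r,c)" .
qed (simp_all add: const_part_def Fmat_def Emat_def)

section \<open>Weights and the diagonal matrices Rhat\<close>

lemma Rhat_dim [simp]:
  "dim_row (Rhat qh n1 n2) = (n1 + 1) * (n2 + 1)" "dim_col (Rhat qh n1 n2) = (n1 + 1) * (n2 + 1)"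
  by (simp_all add: Rhat_def)

lemma Rhat_mat_diag:
  "Rhat qh n1 n2 = mat_diag ((n1 + 1) * (n2 + 1))
     (\<lambda>r. qh powi (weight n1 (r div (n2 + 1)) * weight n2 (r mod (n2 + 1))))"
  by (rule eq_matI) (auto simp: Rhat_def mat_diag_def weight_def)

lemma leg13_Rhat_half:
  fixes qh :: "'a::field"
  shows "leg13 2 n2 (n + 1) (c \<cdot>\<^sub>m Rhat qh 1 n) = mat_diag (2 * n2 * (n + 1))
     (\<lambda>r. c * qh powi (weight 1 (r div (n + 1) div n2) * weight n (r mod (n + 1))))"
proof -
  have "(r div (n2 * (n + 1)) * (n + 1) + r mod (n + 1)) div (n + 1) = r div (n + 1) div n2"
    "(r div (n2 * (n + 1)) * (n + 1) + r mod (n + 1)) mod (n + 1) = r mod (n + 1)" for r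
  proof -
    have "r div (n2 * (n + 1)) = r div (n + 1) div n2"
      using div_mult2_eq[of r "n + 1" n2] by (simp add: mult.commute)
    then show "(r div (n2 * (n + 1)) * (n + 1) + r mod (n + 1)) div (n + 1) = r div (n + 1) div n2"
      "(r div (n2 * (n + 1)) * (n + 1) + r mod (n + 1)) mod (n + 1) = r mod (n + 1)"
      using div_mod_index[of "r mod (n + 1)" "n + 1" "r div (n + 1) div n2"] by simp_all
  qed
  then show ?thesis
    unfolding Rhat_mat_diag smult_mat_diag one_add_one leg13_mat_diag by simp
qed

lemma Rhat13_Rhat12_Emat23:
  fixes qh :: "'a::field"
  assumes "qh \<noteq> 0"
  shows "leg13 2 2 (p + 1) (c1 \<cdot>\<^sub>m Rhat qh 1 p) * leg12 (p + 1) (c2 \<cdot>\<^sub>m Rhat qh 1 1)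
      * leg23 2 (const_part (Emat sq q p))
    = leg23 2 (const_part (Emat sq q p)) * ((c1 * c2) \<cdot>\<^sub>m Rhat qh 1 (p + 1))"
proof -
  let ?E = "const_part (Emat sq q p)"
  have "leg13 2 2 (p + 1) (c1 \<cdot>\<^sub>m Rhat qh 1 p) * leg12 (p + 1) (c2 \<cdot>\<^sub>m Rhat qh 1 1)
     = mat_diag (2 * 2 * (p + 1)) (\<lambda>r. c1 * qh powi (weight 1 (r div (p + 1) div 2) * weight p (r mod (p + 1)))
         * (c2 * qh powi (weight 1 (r div (p + 1) div 2) * weight 1 (r div (p + 1) mod 2))))"
    unfolding leg13_Rhat_half Rhat_mat_diag[of qh 1 1] smult_mat_diag leg12_mat_diag one_add_one
    by (rule mat_diag_mult_mat_diag) simp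
  also have "\<dots> * leg23 2 ?E = leg23 2 ?E * ((c1 * c2) \<cdot>\<^sub>m Rhat qh 1 (p + 1))"
    unfolding Rhat_mat_diag smult_mat_diag one_add_one
  proof (rule mat_diag_intertwine)
    show "leg23 2 ?E \<in> carrier_mat (2 * 2 * (p + 1)) (2 * (p + 1 + 1))"
      by (intro carrier_matI) simp_all
    fix r c assume "r < 2 * 2 * (p + 1)" "c < 2 * (p + 1 + 1)" "leg23 2 ?E $$ (r,c) \<noteq> 0"
    then have "r div (2 * p + 2) = c div (p + 2)" "?E $$ (r mod (2 * p + 2), c mod (p + 2)) \<noteq> 0"
      using kron_one_left_nonzero[of r 2 ?E c] by (simp_all add: leg23_def)
    moreover have "r div (2 * p + 2) = r div (p + 1) div 2"
      using div_mult2_eq[of r "p + 1" 2] by (simp add: algebra_simps)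
    moreover have "r mod (2 * p + 2) div (p + 1) = r div (p + 1) mod 2"
      "r mod (2 * p + 2) mod (p + 1) = r mod (p + 1)"
      using mod_mult_div_mod[of r "p + 1" 2] by (simp_all add: algebra_simps)
    ultimately have a: "r div (p + 1) div 2 = c div (p + 1 + 1)"
      and w: "weight 1 (r div (p + 1) mod 2) + weight p (r mod (p + 1)) = weight (p + 1) (c mod (p + 1 + 1))"
      using const_part_Emat_nonzero_weight[of "r mod (2 * p + 2)" p "c mod (p + 2)" sq q] by simp_all
    have "weight 1 (r div (p + 1) div 2) * weight p (r mod (p + 1))
        + weight 1 (r div (p + 1) div 2) * weight 1 (r div (p + 1) mod 2)
        = weight 1 (c div (p + 1 + 1)) * weight (p + 1) (c mod (p + 1 + 1))"
      unfolding a w[symmetric] by (simp add: algebra_simps)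
    then show "c1 * qh powi (weight 1 (r div (p + 1) div 2) * weight p (r mod (p + 1)))
         * (c2 * qh powi (weight 1 (r div (p + 1) div 2) * weight 1 (r div (p + 1) mod 2)))
      = c1 * c2 * qh powi (weight 1 (c div (p + 1 + 1)) * weight (p + 1) (c mod (p + 1 + 1)))"
      using assms by (simp add: power_int_add[symmetric] mult_ac)
  qed
  finally show ?thesis .
qed

lemma Rhat13_Rhat23_Emat12:
  fixes qh :: "'a::field"
  assumes "qh \<noteq> 0"
  shows "leg13 2 (p + 1) (n2 + 1) (c1 \<cdot>\<^sub>m Rhat qh 1 n2) * leg23 2 (c2 \<cdot>\<^sub>m Rhat qh p n2)
      * leg12 (n2 + 1) (const_part (Emat sq q p))
    = leg12 (n2 + 1) (const_part (Emat sq q p)) * ((c1 * c2) \<cdot>\<^sub>m Rhat qh (p + 1) n2)"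
proof -
  let ?E = "const_part (Emat sq q p)"
  have idx: "r mod ((p + 1) * (n2 + 1)) div (n2 + 1) = r div (n2 + 1) mod (p + 1)"
    "r mod ((p + 1) * (n2 + 1)) mod (n2 + 1) = r mod (n2 + 1)" for r
    using mod_mult_div_mod[of r "n2 + 1" "p + 1"] by (simp_all add: mult.commute)
  have "leg13 2 (p + 1) (n2 + 1) (c1 \<cdot>\<^sub>m Rhat qh 1 n2) * leg23 2 (c2 \<cdot>\<^sub>m Rhat qh p n2)
     = mat_diag (2 * (p + 1) * (n2 + 1)) (\<lambda>r. c1 * qh powi (weight 1 (r div (n2 + 1) div (p + 1)) * weight n2 (r mod (n2 + 1)))
         * (c2 * qh powi (weight p (r div (n2 + 1) mod (p + 1)) * weight n2 (r mod (n2 + 1)))))"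
    unfolding leg13_Rhat_half Rhat_mat_diag[of qh p n2] smult_mat_diag leg23_mat_diag idx
    by (rule mat_diag_mult_mat_diag) simp
  also have "\<dots> * leg12 (n2 + 1) ?E = leg12 (n2 + 1) ?E * ((c1 * c2) \<cdot>\<^sub>m Rhat qh (p + 1) n2)"
    unfolding Rhat_mat_diag smult_mat_diag
  proof (rule mat_diag_intertwine)
    show "leg12 (n2 + 1) ?E \<in> carrier_mat (2 * (p + 1) * (n2 + 1)) ((p + 1 + 1) * (n2 + 1))"
      by (intro carrier_matI) simp_all
    fix r c assume "r < 2 * (p + 1) * (n2 + 1)" "c < (p + 1 + 1) * (n2 + 1)" "leg12 (n2 + 1) ?E $$ (r,c) \<noteq> 0"
    then have mod: "r mod (n2 + 1) = c mod (n2 + 1)" and "?E $$ (r div (n2 + 1), c div (n2 + 1)) \<noteq> 0"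
      and "r div (n2 + 1) < 2 * p + 2" "c div (n2 + 1) < p + 2"
      using kron_one_right_nonzero[of r ?E "n2 + 1" c] less_mult_imp_div_less[of r "2 * p + 2" "n2 + 1"]
        less_mult_imp_div_less[of c "p + 2" "n2 + 1"]
      by (simp_all add: leg12_def algebra_simps)
    then have w: "weight 1 (r div (n2 + 1) div (p + 1)) + weight p (r div (n2 + 1) mod (p + 1))
        = weight (p + 1) (c div (n2 + 1))"
      using const_part_Emat_nonzero_weight by blast
    have "weight 1 (r div (n2 + 1) div (p + 1)) * weight n2 (r mod (n2 + 1))
        + weight p (r div (n2 + 1) mod (p + 1)) * weight n2 (r mod (n2 + 1))
        = weight (p + 1) (c div (n2 + 1)) * weight n2 (c mod (n2 + 1))"
      unfolding mod w[symmetric] by (simp add: algebra_simps)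
    then show "c1 * qh powi (weight 1 (r div (n2 + 1) div (p + 1)) * weight n2 (r mod (n2 + 1)))
         * (c2 * qh powi (weight p (r div (n2 + 1) mod (p + 1)) * weight n2 (r mod (n2 + 1))))
      = c1 * c2 * qh powi (weight (p + 1) (c div (n2 + 1)) * weight n2 (c mod (n2 + 1)))"
      using assms by (simp add: power_int_add[symmetric] mult_ac add_ac)
  qed
  finally show ?thesis .
qed

lemma top_coeffs_Rbase:
  fixes q qh :: "'a::field"
  assumes "qh * qh = q" "qh \<noteq> 0"
  shows "top_coeffs 1 (Rbase q s) ((s * qh) \<cdot>\<^sub>m Rhat qh 1 1)"
proof (rule top_coeffsI)
  fix i j assume "i < dim_row (Rbase q s)" "j < dim_col (Rbase q s)"
  then have "i < 4" "j < 4" by (simp_all add: Rbase_def)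
  then have "i \<in> {0,1,2,3}" "j \<in> {0,1,2,3}" by auto
  then show "(\<forall>k>1. fls_nth (Rbase q s $$ (i,j)) k = 0) \<and>
      fls_nth (Rbase q s $$ (i,j)) 1 = ((s * qh) \<cdot>\<^sub>m Rhat qh 1 1) $$ (i,j)"
    using assms by (auto simp: Rbase_def cfun_def Rhat_def numeral_2_eq_2[symmetric])
qed (simp_all add: Rbase_def Rhat_def)

lemma top_coeffs_sandwich:
  fixes F A B E :: "'a::comm_semiring_1 fls mat"
  assumes "top_coeffs 0 F F0" "top_coeffs a A LA" "top_coeffs b B LB" "top_coeffs 0 E E0"
    and "F0 \<in> carrier_mat k n" "LA \<in> carrier_mat n n" "LB \<in> carrier_mat n n" "E0 \<in> carrier_mat n k"
    and "L \<in> carrier_mat k k"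
    and "F0 * E0 = 1\<^sub>m k" "LA * LB * E0 = E0 * L"
  shows "top_coeffs (a + b) (F * A * B * E) L"
proof -
  have "top_coeffs (0 + a + b + 0) (F * A * B * E) (F0 * LA * LB * E0)"
    using assms(1-8) top_coeffs_dim[OF assms(1)] top_coeffs_dim[OF assms(2)]
      top_coeffs_dim[OF assms(3)] top_coeffs_dim[OF assms(4)]
    by (intro top_coeffs_mult) auto
  moreover have "F0 * LA * LB * E0 = F0 * (LA * LB) * E0"
    using assms(5-7) by (simp add: assoc_mult_mat[of F0 k n LA n])
  moreover have "F0 * (LA * LB) * E0 = L"
    using assms(5-11) by (intro mult_intertwine_left_inverse[OF assms(5) _ assms(8,9,10)]) auto
  ultimately show ?thesis by simp
qed

lemma top_coeffs_Rmat_step_right: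
  fixes q qh :: "'a::field_char_0"
  assumes q_nz: "q \<noteq> 0" and q_not_root: "\<forall>k::nat. k > 0 \<longrightarrow> q ^ k \<noteq> 1"
    and sq: "\<forall>x. sq x * sq x = x" and "qh \<noteq> 0" and "p \<ge> 1"
    and R1: "top_coeffs (int p) R1 (c1 \<cdot>\<^sub>m Rhat qh 1 p)" and R2: "top_coeffs 1 R2 (c2 \<cdot>\<^sub>m Rhat qh 1 1)"
  shows "top_coeffs (int p + 1)
    (leg23 2 (Fmat sq q p) * leg13 2 2 (p + 1) R1 * leg12 (p + 1) R2 * leg23 2 (Emat sq q p))
    ((c1 * c2) \<cdot>\<^sub>m Rhat qh 1 (p + 1))"
proof (rule top_coeffs_sandwich[where k = "2 * (p + 2)" and n = "2 * (2 * p + 2)"])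
  show "top_coeffs 0 (leg23 2 (Fmat sq q p)) (leg23 2 (const_part (Fmat sq q p)))"
    "top_coeffs 0 (leg23 2 (Emat sq q p)) (leg23 2 (const_part (Emat sq q p)))"
    by (intro top_coeffs_leg23 top_coeffs_Fmat top_coeffs_Emat)+
  show "top_coeffs (int p) (leg13 2 2 (p + 1) R1) (leg13 2 2 (p + 1) (c1 \<cdot>\<^sub>m Rhat qh 1 p))"
    using top_coeffs_dim[OF R1] by (intro top_coeffs_leg13[OF R1]) simp_all
  show "top_coeffs 1 (leg12 (p + 1) R2) (leg12 (p + 1) (c2 \<cdot>\<^sub>m Rhat qh 1 1))"
    by (rule top_coeffs_leg12[OF R2])
  show "leg23 2 (const_part (Fmat sq q p)) * leg23 2 (const_part (Emat sq q p)) = 1\<^sub>m (2 * (p + 2))"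
    using const_part_Fmat_mult_Emat[OF q_nz q_not_root sq \<open>p \<ge> 1\<close>]
    by (subst leg23_mult) (simp_all add: leg23_def kron_one_one)
  show "leg13 2 2 (p + 1) (c1 \<cdot>\<^sub>m Rhat qh 1 p) * leg12 (p + 1) (c2 \<cdot>\<^sub>m Rhat qh 1 1)
      * leg23 2 (const_part (Emat sq q p))
    = leg23 2 (const_part (Emat sq q p)) * ((c1 * c2) \<cdot>\<^sub>m Rhat qh 1 (p + 1))"
    by (rule Rhat13_Rhat12_Emat23[OF \<open>qh \<noteq> 0\<close>])
qed (auto intro!: carrier_matI)

lemma top_coeffs_Rmat_step_left:
  fixes q qh :: "'a::field_char_0"
  assumes q_nz: "q \<noteq> 0" and q_not_root: "\<forall>k::nat. k > 0 \<longrightarrow> q ^ k \<noteq> 1"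
    and sq: "\<forall>x. sq x * sq x = x" and "qh \<noteq> 0" and "p \<ge> 1"
    and R1: "top_coeffs (int n2) R1 (c1 \<cdot>\<^sub>m Rhat qh 1 n2)"
    and R2: "top_coeffs (int (p * n2)) R2 (c2 \<cdot>\<^sub>m Rhat qh p n2)"
  shows "top_coeffs (int ((p + 1) * n2))
    (leg12 (n2 + 1) (Fmat sq q p) * leg13 2 (p + 1) (n2 + 1) R1 * leg23 2 R2 * leg12 (n2 + 1) (Emat sq q p))
    ((c1 * c2) \<cdot>\<^sub>m Rhat qh (p + 1) n2)"
proof -
  have "top_coeffs (int n2 + int (p * n2))
    (leg12 (n2 + 1) (Fmat sq q p) * leg13 2 (p + 1) (n2 + 1) R1 * leg23 2 R2 * leg12 (n2 + 1) (Emat sq q p))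
    ((c1 * c2) \<cdot>\<^sub>m Rhat qh (p + 1) n2)"
  proof (rule top_coeffs_sandwich[where k = "(p + 2) * (n2 + 1)" and n = "(2 * p + 2) * (n2 + 1)"])
    show "top_coeffs 0 (leg12 (n2 + 1) (Fmat sq q p)) (leg12 (n2 + 1) (const_part (Fmat sq q p)))"
      "top_coeffs 0 (leg12 (n2 + 1) (Emat sq q p)) (leg12 (n2 + 1) (const_part (Emat sq q p)))"
      by (intro top_coeffs_leg12 top_coeffs_Fmat top_coeffs_Emat)+
    show "top_coeffs (int n2) (leg13 2 (p + 1) (n2 + 1) R1) (leg13 2 (p + 1) (n2 + 1) (c1 \<cdot>\<^sub>m Rhat qh 1 n2))"
      using top_coeffs_dim[OF R1] by (intro top_coeffs_leg13[OF R1]) simp_all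
    show "top_coeffs (int (p * n2)) (leg23 2 R2) (leg23 2 (c2 \<cdot>\<^sub>m Rhat qh p n2))"
      by (rule top_coeffs_leg23[OF R2])
    show "leg12 (n2 + 1) (const_part (Fmat sq q p)) * leg12 (n2 + 1) (const_part (Emat sq q p))
      = 1\<^sub>m ((p + 2) * (n2 + 1))"
      using const_part_Fmat_mult_Emat[OF q_nz q_not_root sq \<open>p \<ge> 1\<close>]
      by (subst leg12_mult) (simp_all add: leg12_def kron_one_one)
    show "leg13 2 (p + 1) (n2 + 1) (c1 \<cdot>\<^sub>m Rhat qh 1 n2) * leg23 2 (c2 \<cdot>\<^sub>m Rhat qh p n2)
        * leg12 (n2 + 1) (const_part (Emat sq q p))
      = leg12 (n2 + 1) (const_part (Emat sq q p)) * ((c1 * c2) \<cdot>\<^sub>m Rhat qh (p + 1) n2)"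
      by (rule Rhat13_Rhat23_Emat12[OF \<open>qh \<noteq> 0\<close>])
  qed (auto intro!: carrier_matI)
  then show ?thesis by (simp add: algebra_simps)
qed

text \<open>The spectral parameter s stays arbitrary in the inductions, since the recursion rescales it.\<close>

lemma top_coeffs_Rmat_one:
  fixes q qh :: "'a::field_char_0"
  assumes q_nz: "q \<noteq> 0" and q_not_root: "\<forall>k::nat. k > 0 \<longrightarrow> q ^ k \<noteq> 1"
    and sq: "\<forall>x. sq x * sq x = x" and qh: "qh * qh = q" and "n \<ge> 1"
  shows "top_coeffs (int n) (Rmat sq q qh 1 n s) ((s * qh) ^ n \<cdot>\<^sub>m Rhat qh 1 n)"
  using \<open>n \<ge> 1\<close>
proof (induction n arbitrary: s rule: nat_induct_at_least)
  case base
  have "qh \<noteq> 0" using qh q_nz by auto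
  then show ?case using top_coeffs_Rbase[OF qh] by simp
next
  case (Suc n)
  have "qh \<noteq> 0" using qh q_nz by auto
  obtain m where m: "n = Suc m" using Suc.hyps by (cases n) auto
  have coeff: "(inverse qh * s * qh) ^ n * (qh ^ n * s * qh) = (s * qh) ^ Suc n"
    using \<open>qh \<noteq> 0\<close> by (simp add: power_mult_distrib field_simps)
  have "top_coeffs (int n + 1)
    (leg23 2 (Fmat sq q n) * leg13 2 2 (n + 1) (Rmat sq q qh 1 n (inverse qh * s))
      * leg12 (n + 1) (Rmat sq q qh 1 1 (qh ^ n * s)) * leg23 2 (Emat sq q n))
    ((s * qh) ^ Suc n \<cdot>\<^sub>m Rhat qh 1 (n + 1))"
    unfolding coeff[symmetric]
    using top_coeffs_Rbase[OF qh \<open>qh \<noteq> 0\<close>, of "qh ^ n * s"] Suc.IH Suc.hyps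
    by (intro top_coeffs_Rmat_step_right[OF q_nz q_not_root sq \<open>qh \<noteq> 0\<close>]) simp_all
  then show ?case by (simp add: m)
qed

lemma top_coeffs_Rmat:
  fixes q qh :: "'a::field_char_0"
  assumes q_nz: "q \<noteq> 0" and q_not_root: "\<forall>k::nat. k > 0 \<longrightarrow> q ^ k \<noteq> 1"
    and sq: "\<forall>x. sq x * sq x = x" and qh: "qh * qh = q" and "n1 \<ge> 1" and "n2 \<ge> 1"
  shows "top_coeffs (int (n1 * n2)) (Rmat sq q qh n1 n2 s) ((s * qh) ^ (n1 * n2) \<cdot>\<^sub>m Rhat qh n1 n2)"
  using \<open>n1 \<ge> 1\<close>
proof (induction n1 arbitrary: s rule: nat_induct_at_least)
  case base
  show ?case using top_coeffs_Rmat_one[OF q_nz q_not_root sq qh \<open>n2 \<ge> 1\<close>] by simp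
next
  case (Suc p)
  have "qh \<noteq> 0" using qh q_nz by auto
  obtain m where m: "p = Suc m" using Suc.hyps by (cases p) auto
  have coeff: "(inverse qh ^ p * s * qh) ^ n2 * (qh * s * qh) ^ (p * n2) = (s * qh) ^ (Suc p * n2)"
  proof -
    have "(inverse qh ^ p) ^ n2 * qh ^ (p * n2) = 1"
      using \<open>qh \<noteq> 0\<close> by (simp add: power_mult[symmetric] power_inverse)
    then show ?thesis
      by (simp add: power_mult_distrib power_add power_mult[symmetric] mult_ac)
  qed
  have "top_coeffs (int ((p + 1) * n2))
    (leg12 (n2 + 1) (Fmat sq q p) * leg13 2 (p + 1) (n2 + 1) (Rmat sq q qh 1 n2 (inverse qh ^ p * s))
      * leg23 2 (Rmat sq q qh p n2 (qh * s)) * leg12 (n2 + 1) (Emat sq q p))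
    ((s * qh) ^ (Suc p * n2) \<cdot>\<^sub>m Rhat qh (p + 1) n2)"
    unfolding coeff[symmetric]
    using top_coeffs_Rmat_one[OF q_nz q_not_root sq qh \<open>n2 \<ge> 1\<close>] Suc.IH Suc.hyps
    by (intro top_coeffs_Rmat_step_left[OF q_nz q_not_root sq \<open>qh \<noteq> 0\<close>])
  then show ?case by (simp add: m)
qed

theorem proposition5p3:
  fixes q qh :: "'a::field_char_0" and sq :: "'a \<Rightarrow> 'a" and n1 n2 :: nat
  assumes all_sqrt: "\<forall>x::'a. \<exists>y. y * y = x"
    and q_nz: "q \<noteq> 0"
    and q_not_root: "\<forall>k::nat. k > 0 \<longrightarrow> q ^ k \<noteq> 1"
    and qh: "qh * qh = q"
    and sq: "\<forall>x. sq x * sq x = x"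
    and n1: "n1 \<ge> 1" and n2: "n2 \<ge> 1"
  shows "(\<forall>i j k. i < dim_row (Rmat sq q qh n1 n2 1) \<longrightarrow> j < dim_col (Rmat sq q qh n1 n2 1)
            \<longrightarrow> int (n1 * n2) < k \<longrightarrow> fls_nth (Rmat sq q qh n1 n2 1 $$ (i,j)) k = 0)
       \<and> map_mat (\<lambda>f. fls_nth f (int (n1 * n2))) (Rmat sq q qh n1 n2 1)
           = (qh ^ (n1 * n2)) \<cdot>\<^sub>m Rhat qh n1 n2"
  using top_coeffs_Rmat[OF q_nz q_not_root sq qh n1 n2, of 1] unfolding top_coeffs_def by simp

end
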